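(* Let $Q$ be a quiver without oriented cycles and $\mathbf D=k\tilde Q/\mathcal I$. If $M$ is a $\Delta$-filtered $\mathbf D$-module and $i$ is a sink of $Q$, then $\mathrm{Ext}^1_{\mathbf D}(M,\Delta(i))=0$.
   Context: $k$ is an algebraically closed field. $\tilde Q$ is the double of $Q$ (arrows $\alpha\in Q_1$ and reversed arrows $\alpha^*:t(\alpha)\to s(\alpha)$), paths composed right to left; $\mathcal I$ is the ideal of $k\tilde Q$ generated by $\alpha^*\alpha-\sum_{\gamma\in Q_1,t(\gamma)=s(\alpha)}\gamma\gamma^*$ ($\alpha\in Q_1$) and $\beta^*\alpha$ ($\alpha\ne\beta\in Q_1$ with $t(\alpha)=t(\beta)$). $\Delta(i)$ is the indecomposable projective $kQ$-module with simple top $L(i)$, regarded as a $\mathbf D$-module via the surjection $\mathbf D\to kQ$ killing all $\alpha^*$. A $\mathbf D$-module is $\Delta$-filtered if it has a chain of submodules whose successive quotients are isomorphic to modules $\Delta(j)$. A vertex is a sink if no arrow of $Q$ starts there, a source if no arrow of $Q$ ends there. *)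

theory Defs
  imports "Jordan_Normal_Form.Matrix" "HOL-Computational_Algebra.Polynomial"
begin

definition alg_closed :: "'k::field itself \<Rightarrow> bool" where
  "alg_closed _ \<longleftrightarrow> (\<forall>p::'k poly. degree p > 0 \<longrightarrow> (\<exists>x. poly p x = 0))"

text \<open>A (finite-dimensional) D-module is a representation of the double quiver:
  vector space k^(dimv v) at vertex v, matrix amap a : s a -> t a for each arrow a,
  matrix smap a : t a -> s a for the reversed arrow a*, satisfying the relations of I.
  Paths are composed right to left.\<close>
record ('v, 'e, 'k) drep =
  dimv :: "'v \<Rightarrow> nat"
  amap :: "'e \<Rightarrow> 'k mat"
  smap :: "'e \<Rightarrow> 'k mat"

definition is_Drep :: "('e::finite \<Rightarrow> 'v) \<Rightarrow> ('e \<Rightarrow> 'v) \<Rightarrow> ('v, 'e, 'k::field) drep \<Rightarrow> bool" where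
  "is_Drep s t M \<longleftrightarrow>
    (\<forall>a. amap M a \<in> carrier_mat (dimv M (t a)) (dimv M (s a))
       \<and> smap M a \<in> carrier_mat (dimv M (s a)) (dimv M (t a))) \<and>
    (\<forall>a. \<forall>i < dimv M (s a). \<forall>j < dimv M (s a).
        (smap M a * amap M a) $$ (i, j)
          = (\<Sum>c \<in> {c. t c = s a}. (amap M c * smap M c) $$ (i, j))) \<and>
    (\<forall>a b. a \<noteq> b \<and> t a = t b \<longrightarrow>
        smap M b * amap M a = 0\<^sub>m (dimv M (s b)) (dimv M (s a)))"

definition is_hom :: "('e \<Rightarrow> 'v) \<Rightarrow> ('e \<Rightarrow> 'v) \<Rightarrow> ('v, 'e, 'k::field) drep \<Rightarrow> ('v, 'e, 'k) drep
    \<Rightarrow> ('v \<Rightarrow> 'k mat) \<Rightarrow> bool" where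
  "is_hom s t M N f \<longleftrightarrow>
    (\<forall>v. f v \<in> carrier_mat (dimv N v) (dimv M v)) \<and>
    (\<forall>a. amap N a * f (s a) = f (t a) * amap M a \<and> smap N a * f (t a) = f (s a) * smap M a)"

definition is_ses :: "('e \<Rightarrow> 'v) \<Rightarrow> ('e \<Rightarrow> 'v) \<Rightarrow> ('v, 'e, 'k::field) drep \<Rightarrow> ('v, 'e, 'k) drep
    \<Rightarrow> ('v, 'e, 'k) drep \<Rightarrow> ('v \<Rightarrow> 'k mat) \<Rightarrow> ('v \<Rightarrow> 'k mat) \<Rightarrow> bool" where
  "is_ses s t L E M f g \<longleftrightarrow> is_hom s t L E f \<and> is_hom s t E M g \<and>
    (\<forall>v. (\<forall>x \<in> carrier_vec (dimv L v). f v *\<^sub>v x = 0\<^sub>v (dimv E v) \<longrightarrow> x = 0\<^sub>v (dimv L v)) \<and>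
         (\<forall>z \<in> carrier_vec (dimv M v). \<exists>y \<in> carrier_vec (dimv E v). g v *\<^sub>v y = z) \<and>
         (\<forall>y \<in> carrier_vec (dimv E v). g v *\<^sub>v y = 0\<^sub>v (dimv M v)
              \<longleftrightarrow> (\<exists>x \<in> carrier_vec (dimv L v). y = f v *\<^sub>v x)))"

text \<open>Ext^1_D(M,N) = 0 (Yoneda description): every extension 0 -> N -> E -> M -> 0
  of D-modules splits.\<close>
definition Ext1_vanishes :: "('e::finite \<Rightarrow> 'v) \<Rightarrow> ('e \<Rightarrow> 'v) \<Rightarrow> ('v, 'e, 'k::field) drep
    \<Rightarrow> ('v, 'e, 'k) drep \<Rightarrow> bool" where
  "Ext1_vanishes s t M N \<longleftrightarrow>
    (\<forall>E f g. is_Drep s t E \<longrightarrow> is_ses s t N E M f g \<longrightarrow>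
       (\<exists>h. is_hom s t M E h \<and> (\<forall>v. g v * h v = 1\<^sub>m (dimv M v))))"

text \<open>Paths from i to j, as lists of arrows, composed right to left (alpha p = alpha # p).\<close>
inductive qpath :: "('e \<Rightarrow> 'v) \<Rightarrow> ('e \<Rightarrow> 'v) \<Rightarrow> 'v \<Rightarrow> 'v \<Rightarrow> 'e list \<Rightarrow> bool"
  for s t where
  nil: "qpath s t i i []"
| cons: "qpath s t i (s a) p \<Longrightarrow> qpath s t i (t a) (a # p)"

definition path_basis :: "('e \<Rightarrow> 'v) \<Rightarrow> ('e \<Rightarrow> 'v) \<Rightarrow> 'v \<Rightarrow> 'v \<Rightarrow> 'e list list" where
  "path_basis s t i j = (SOME xs. distinct xs \<and> set xs = {p. qpath s t i j p})"

text \<open>Delta(i) = kQ e_i, the indecomposable projective kQ-module with top L(i):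
  at vertex j it has basis the paths from i to j, arrows act by left composition,
  reversed arrows act by zero.\<close>
definition Delta :: "('e \<Rightarrow> 'v) \<Rightarrow> ('e \<Rightarrow> 'v) \<Rightarrow> 'v \<Rightarrow> ('v, 'e, 'k::field) drep" where
  "Delta s t i = \<lparr> dimv = (\<lambda>j. length (path_basis s t i j)),
     amap = (\<lambda>a. mat (length (path_basis s t i (t a))) (length (path_basis s t i (s a)))
               (\<lambda>(r, c). if path_basis s t i (t a) ! r = a # (path_basis s t i (s a) ! c)
                         then 1 else 0)),
     smap = (\<lambda>a. 0\<^sub>m (length (path_basis s t i (s a))) (length (path_basis s t i (t a)))) \<rparr>"

text \<open>Delta-filtered: a chain 0 = M_0 <= ... <= M_n = M with M_k/M_(k-1) = Delta(j_k),
  expressed recursively through the top step 0 -> M_(n-1) -> M -> Delta(j_n) -> 0.\<close>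
inductive Delta_filtered :: "('e::finite \<Rightarrow> 'v) \<Rightarrow> ('e \<Rightarrow> 'v) \<Rightarrow> ('v, 'e, 'k::field) drep \<Rightarrow> bool"
  for s t where
  zero: "is_Drep s t M \<Longrightarrow> (\<forall>v. dimv M v = 0) \<Longrightarrow> Delta_filtered s t M"
| step: "Delta_filtered s t M' \<Longrightarrow> is_Drep s t M \<Longrightarrow> is_ses s t M' M (Delta s t j) f g
          \<Longrightarrow> Delta_filtered s t M"

end

theory Submission
  imports Defs
begin

text \<open>
  Since \<open>i\<close> is a sink, \<open>\<Delta>(i)\<close> is the simple module at \<open>i\<close>, so a retraction of \<open>f\<close> amounts to
  a linear functional \<open>y\<close> on \<open>E_i\<close> which is 1 on the image of \<open>f\<close> and vanishes on the images of
  all arrows ending at \<open>i\<close>; a retraction then yields a splitting by the usual correction of an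
  arbitrary linear section of \<open>g\<close>.  Such a \<open>y\<close> exists (Fredholm alternative) unless the image
  of \<open>f\<close> lies in the span of the arrow images.  This is excluded because every \<open>\<Delta>\<close>-filtered
  module has injective "incoming maps" \<open>\<Oplus>_(t a = i) M_(s a) \<rightarrow> M_i\<close>: this holds for each
  \<open>\<Delta>(j)\<close> (composing distinct paths with distinct arrows gives distinct paths) and is closed
  under extensions.
\<close>

definition in_span :: "nat \<Rightarrow> 'j set \<Rightarrow> ('j \<Rightarrow> 'k::field vec) \<Rightarrow> 'k vec \<Rightarrow> bool" where
  "in_span n J v b \<longleftrightarrow> (\<exists>c. \<forall>r<n. b $ r = (\<Sum>j\<in>J. c j * v j $ r))"

definition separated :: "nat \<Rightarrow> 'j set \<Rightarrow> ('j \<Rightarrow> 'k::field vec) \<Rightarrow> 'k vec \<Rightarrow> bool" where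
  "separated n J v b \<longleftrightarrow> (\<exists>y\<in>carrier_vec n. y \<bullet> b = 1 \<and> (\<forall>j\<in>J. y \<bullet> v j = 0))"

lemma scalar_prod_in_span:
  fixes v :: "'j \<Rightarrow> 'k::field vec"
  assumes v: "\<forall>j\<in>J. v j \<in> carrier_vec n" and y: "y \<in> carrier_vec n" and b: "b \<in> carrier_vec n"
    and c: "\<forall>r<n. b $ r = (\<Sum>j\<in>J. c j * v j $ r)"
  shows "y \<bullet> b = (\<Sum>j\<in>J. c j * (y \<bullet> v j))"
proof -
  have "y \<bullet> b = (\<Sum>r\<in>{0..<n}. y $ r * (\<Sum>j\<in>J. c j * v j $ r))"
    unfolding scalar_prod_def using y b c by auto
  also have "\<dots> = (\<Sum>j\<in>J. \<Sum>r\<in>{0..<n}. c j * (y $ r * v j $ r))"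
    by (subst sum.swap) (simp add: sum_distrib_left ac_simps)
  also have "\<dots> = (\<Sum>j\<in>J. c j * (y \<bullet> v j))"
    unfolding scalar_prod_def sum_distrib_left using v by (intro sum.cong) auto
  finally show ?thesis .
qed

lemma separated_from_nothing:
  assumes b: "b \<in> carrier_vec n" and nz: "\<not> (\<forall>r<n. b $ r = 0)"
  shows "separated n {} v b"
proof -
  from nz obtain k where k: "k < n" "b $ k \<noteq> 0" by auto
  define y where "y = inverse (b $ k) \<cdot>\<^sub>v unit_vec n k"
  have "y \<bullet> b = inverse (b $ k) * (unit_vec n k \<bullet> b)"
    unfolding y_def using b by (intro smult_scalar_prod_distrib) auto
  also have "unit_vec n k \<bullet> b = b $ k" using k b by (intro scalar_prod_left_unit) auto
  finally show ?thesis using k unfolding separated_def y_def by auto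
qed

lemma in_span_insert:
  assumes "finite J" "j0 \<notin> J" "in_span n J v b"
  shows "in_span n (insert j0 J) v b"
proof -
  from assms(3) obtain c where c: "\<forall>r<n. b $ r = (\<Sum>j\<in>J. c j * v j $ r)"
    unfolding in_span_def by blast
  have "(\<Sum>j\<in>insert j0 J. (c(j0 := 0)) j * v j $ r) = (\<Sum>j\<in>J. c j * v j $ r)" for r
    using assms(1,2) by (simp add: sum.insert) (intro sum.cong, auto)
  then show ?thesis using c unfolding in_span_def by metis
qed

lemma separated_insert_dependent:
  assumes v: "\<forall>j\<in>insert j0 J. v j \<in> carrier_vec n"
    and dep: "in_span n J v (v j0)" and sep: "separated n J v b"
  shows "separated n (insert j0 J) v b"
proof -
  from sep obtain y where y: "y \<in> carrier_vec n" "y \<bullet> b = 1" "\<forall>j\<in>J. y \<bullet> v j = 0"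
    unfolding separated_def by blast
  from dep obtain c where c: "\<forall>r<n. v j0 $ r = (\<Sum>j\<in>J. c j * v j $ r)"
    unfolding in_span_def by blast
  have "y \<bullet> v j0 = (\<Sum>j\<in>J. c j * (y \<bullet> v j))"
    using v y(1) c by (intro scalar_prod_in_span) auto
  also have "\<dots> = 0" using y(3) by simp
  finally show ?thesis using y unfolding separated_def by auto
qed

text \<open>If some functional \<open>y1\<close> detects \<open>v j0\<close> and kills the rest of the family, then deciding
  the alternative for \<open>b\<close> reduces to deciding it for \<open>b - (y1 \<bullet> b) \<cdot> v j0\<close>.\<close>
lemma in_span_insert_independent:
  assumes "finite J" "j0 \<notin> J" and b: "b \<in> carrier_vec n" and v0: "v j0 \<in> carrier_vec n"
    and "in_span n J v (b - (y1 \<bullet> b) \<cdot>\<^sub>v v j0)"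
  shows "in_span n (insert j0 J) v b"
proof -
  let ?b2 = "b - (y1 \<bullet> b) \<cdot>\<^sub>v v j0"
  from assms(5) obtain c where c: "\<forall>r<n. ?b2 $ r = (\<Sum>j\<in>J. c j * v j $ r)"
    unfolding in_span_def by blast
  have "b $ r = (\<Sum>j\<in>insert j0 J. (c(j0 := y1 \<bullet> b)) j * v j $ r)" if r: "r < n" for r
  proof -
    have e: "b $ r - (y1 \<bullet> b) * v j0 $ r = (\<Sum>j\<in>J. c j * v j $ r)" using c r b v0 by simp
    have "(\<Sum>j\<in>insert j0 J. (c(j0 := y1 \<bullet> b)) j * v j $ r)
        = (y1 \<bullet> b) * v j0 $ r + (\<Sum>j\<in>J. c j * v j $ r)"
      using assms(1,2) by (simp add: sum.insert) (intro sum.cong, auto)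
    then show ?thesis by (simp flip: e)
  qed
  then show ?thesis unfolding in_span_def by blast
qed

lemma separated_insert_independent:
  assumes v: "\<forall>j\<in>insert j0 J. v j \<in> carrier_vec n" and b: "b \<in> carrier_vec n"
    and y1: "y1 \<in> carrier_vec n" "y1 \<bullet> v j0 = 1" "\<forall>j\<in>J. y1 \<bullet> v j = 0"
    and "separated n J v (b - (y1 \<bullet> b) \<cdot>\<^sub>v v j0)"
  shows "separated n (insert j0 J) v b"
proof -
  from assms(6) obtain y2 where y2: "y2 \<in> carrier_vec n" "y2 \<bullet> (b - (y1 \<bullet> b) \<cdot>\<^sub>v v j0) = 1"
      "\<forall>j\<in>J. y2 \<bullet> v j = 0"
    unfolding separated_def by blast
  define z where "z = y2 - (y2 \<bullet> v j0) \<cdot>\<^sub>v y1"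
  have v0: "v j0 \<in> carrier_vec n" using v by auto
  have "y2 \<bullet> (b - (y1 \<bullet> b) \<cdot>\<^sub>v v j0) = y2 \<bullet> b - (y1 \<bullet> b) * (y2 \<bullet> v j0)"
    using y2(1) b v0 by (simp add: scalar_prod_minus_distrib[of _ n])
  moreover have "z \<bullet> b = y2 \<bullet> b - (y2 \<bullet> v j0) * (y1 \<bullet> b)"
    unfolding z_def using y1 y2 b by (simp add: minus_scalar_prod_distrib[of _ n])
  ultimately have "z \<bullet> b = 1" using y2(2) by (simp add: ac_simps)
  moreover have "\<forall>j\<in>insert j0 J. z \<bullet> v j = 0"
    unfolding z_def using y1 y2 v by (simp add: minus_scalar_prod_distrib[of _ n])
  moreover have "z \<in> carrier_vec n" unfolding z_def using y1 y2 by auto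
  ultimately show ?thesis unfolding separated_def by blast
qed

lemma span_or_separated:
  assumes "finite J" "\<forall>j\<in>J. v j \<in> carrier_vec n" "b \<in> carrier_vec n"
  shows "in_span n J v b \<or> separated n J v b"
  using assms
proof (induction J arbitrary: b rule: finite_induct)
  case empty
  then show ?case using separated_from_nothing[of b n v] unfolding in_span_def by auto
next
  case (insert j0 J)
  have vJ: "\<forall>j\<in>J. v j \<in> carrier_vec n" and v0: "v j0 \<in> carrier_vec n"
    using insert.prems by auto
  from insert.IH[OF vJ v0] show ?case
  proof
    assume "in_span n J v (v j0)"
    then show ?thesis using insert.IH[OF vJ insert.prems(2)] insert.hyps insert.prems
        in_span_insert separated_insert_dependent by metis
  next
    assume "separated n J v (v j0)"
    then obtain y1 where y1: "y1 \<in> carrier_vec n" "y1 \<bullet> v j0 = 1" "\<forall>j\<in>J. y1 \<bullet> v j = 0"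
      unfolding separated_def by blast
    have "b - (y1 \<bullet> b) \<cdot>\<^sub>v v j0 \<in> carrier_vec n" using insert.prems v0 by auto
    then show ?thesis using insert.IH[OF vJ] insert.hyps insert.prems v0 y1
        in_span_insert_independent separated_insert_independent by metis
  qed
qed

lemma mult_mat_zero_vec: "A \<in> carrier_mat m n \<Longrightarrow> A *\<^sub>v 0\<^sub>v n = 0\<^sub>v m"
  by (intro eq_vecI) auto

lemma mult_mat_vec_sum:
  assumes G: "G \<in> carrier_mat m n" and w: "\<forall>a\<in>A. w a \<in> carrier_vec n" and r: "r < m"
  shows "(G *\<^sub>v vec n (\<lambda>k. \<Sum>a\<in>A. w a $ k)) $ r = (\<Sum>a\<in>A. (G *\<^sub>v w a) $ r)"
proof -
  have "(\<Sum>a\<in>A. (G *\<^sub>v w a) $ r) = (\<Sum>a\<in>A. \<Sum>k\<in>{0..<n}. G $$ (r, k) * w a $ k)"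
    using G w r by (intro sum.cong) (auto simp: scalar_prod_def)
  also have "\<dots> = (\<Sum>k\<in>{0..<n}. \<Sum>a\<in>A. G $$ (r, k) * w a $ k)" by (rule sum.swap)
  also have "\<dots> = (G *\<^sub>v vec n (\<lambda>k. \<Sum>a\<in>A. w a $ k)) $ r"
    using G r by (auto simp: scalar_prod_def sum_distrib_left)
  finally show ?thesis by simp
qed

lemma col_as_mult_unit:
  fixes A :: "'k::field mat"
  assumes "A \<in> carrier_mat m n" "c < n"
  shows "col A c = A *\<^sub>v unit_vec n c"
  using assms by (intro eq_vecI) (auto simp: scalar_prod_right_unit)

lemma right_inverse_of_surjective:
  fixes g :: "'k::field mat"
  assumes g: "g \<in> carrier_mat m n" and surj: "\<forall>z\<in>carrier_vec m. \<exists>y\<in>carrier_vec n. g *\<^sub>v y = z"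
  shows "\<exists>Y\<in>carrier_mat n m. g * Y = 1\<^sub>m m"
proof -
  have "\<forall>c. \<exists>y. c < m \<longrightarrow> y \<in> carrier_vec n \<and> g *\<^sub>v y = unit_vec m c"
    using surj unit_vec_carrier by blast
  then obtain y where y: "\<And>c. c < m \<Longrightarrow> y c \<in> carrier_vec n \<and> g *\<^sub>v y c = unit_vec m c"
    by (metis choice)
  define Y where "Y = mat n m (\<lambda>(r, c). y c $ r)"
  have Y: "Y \<in> carrier_mat n m" unfolding Y_def by simp
  have "col (g * Y) c = col (1\<^sub>m m) c" if c: "c < m" for c
  proof -
    have "col Y c = y c" unfolding Y_def using y[OF c] c by (intro eq_vecI) auto
    then have "col (g * Y) c = g *\<^sub>v y c" using col_mult2[OF g Y c] by simp
    then show ?thesis using y[OF c] c by simp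
  qed
  then have "g * Y = 1\<^sub>m m"
    using g Y by (intro mat_col_eqI) auto
  then show ?thesis using Y by blast
qed

lemma zero_by_exactness:
  fixes D :: "'k::field mat"
  assumes D: "D \<in> carrier_mat ew mu" and gw: "gw \<in> carrier_mat mw ew"
    and fw: "fw \<in> carrier_mat ew nw" and Rw: "Rw \<in> carrier_mat nw ew"
    and ker: "\<forall>y\<in>carrier_vec ew. gw *\<^sub>v y = 0\<^sub>v mw \<longrightarrow> (\<exists>x\<in>carrier_vec nw. y = fw *\<^sub>v x)"
    and Rf: "Rw * fw = 1\<^sub>m nw" and gD: "gw * D = 0\<^sub>m mw mu" and RD: "Rw * D = 0\<^sub>m nw mu"
  shows "D = 0\<^sub>m ew mu"
proof (rule mat_col_eqI)
  fix c assume "c < dim_col (0\<^sub>m ew mu :: 'k mat)"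
  then have c: "c < mu" by simp
  have "gw *\<^sub>v col D c = col (gw * D) c" by (rule col_mult2[OF gw D c, symmetric])
  also have "\<dots> = 0\<^sub>v mw" unfolding gD using c by simp
  finally obtain x where x: "x \<in> carrier_vec nw" "col D c = fw *\<^sub>v x"
    using ker col_carrier_vec[OF c D] by blast
  have "x = (Rw * fw) *\<^sub>v x" unfolding Rf using x by simp
  also have "\<dots> = Rw *\<^sub>v col D c" using Rw fw x by (simp add: x(2))
  also have "\<dots> = col (Rw * D) c" by (rule col_mult2[OF Rw D c, symmetric])
  also have "\<dots> = 0\<^sub>v nw" unfolding RD using c by simp
  finally show "col D c = col (0\<^sub>m ew mu) c"
    using x(2) fw c by (simp add: mult_mat_zero_vec)
qed (use D in auto)

lemma corrected_section:
  fixes g :: "'k::field mat"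
  assumes g: "g \<in> carrier_mat m e" and f: "f \<in> carrier_mat e n" and R: "R \<in> carrier_mat n e"
    and Y: "Y \<in> carrier_mat e m"
    and gf: "g * f = 0\<^sub>m m n" and Rf: "R * f = 1\<^sub>m n" and gY: "g * Y = 1\<^sub>m m"
  shows "g * ((1\<^sub>m e - f * R) * Y) = 1\<^sub>m m" "R * ((1\<^sub>m e - f * R) * Y) = 0\<^sub>m n m"
proof -
  have "g * (1\<^sub>m e - f * R) = g * 1\<^sub>m e - (g * f) * R"
    using g f R by (subst mult_minus_distrib_mat[OF g]) auto
  also have "\<dots> = g" unfolding gf using g R by (intro eq_matI) auto
  finally have g_proj: "g * (1\<^sub>m e - f * R) = g" .
  have "R * (1\<^sub>m e - f * R) = R * 1\<^sub>m e - (R * f) * R"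
    using f R by (subst mult_minus_distrib_mat[OF R]) auto
  also have "\<dots> = 0\<^sub>m n e" unfolding Rf using R by simp
  finally have R_proj: "R * (1\<^sub>m e - f * R) = 0\<^sub>m n e" .
  have P: "1\<^sub>m e - f * R \<in> carrier_mat e e" using f R by auto
  show "g * ((1\<^sub>m e - f * R) * Y) = 1\<^sub>m m"
    using assoc_mult_mat[OF g P Y] g_proj gY by simp
  show "R * ((1\<^sub>m e - f * R) * Y) = 0\<^sub>m n m"
    using assoc_mult_mat[OF R P Y] R_proj Y by simp
qed

lemma path_basis_props:
  assumes "finite {p. qpath s t i j p}"
  shows "distinct (path_basis s t i j) \<and> set (path_basis s t i j) = {p. qpath s t i j p}"
proof -
  obtain xs where "set xs = {p. qpath s t i j p} \<and> distinct xs"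
    using finite_distinct_list[OF assms] by blast
  then have "\<exists>xs. distinct xs \<and> set xs = {p. qpath s t i j p}" by blast
  then show ?thesis unfolding path_basis_def by (rule someI_ex)
qed

fun pverts :: "('e \<Rightarrow> 'v) \<Rightarrow> 'v \<Rightarrow> 'e list \<Rightarrow> 'v list" where
  "pverts t j [] = [j]"
| "pverts t j (a # p) = t a # pverts t j p"

lemma length_pverts: "length (pverts t j p) = Suc (length p)"
  by (induction p) auto

lemma qpath_pverts:
  assumes ac: "acyclic {(s a, t a) | a. True}"
  shows "qpath s t j v p \<Longrightarrow> distinct (pverts t j p) \<and>
    (\<forall>u\<in>set (pverts t j p). (u, v) \<in> {(s a, t a) | a. True}\<^sup>*)"
proof (induction rule: qpath.induct)
  case (nil i)
  then show ?case by simp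
next
  case (cons i a p)
  let ?R = "{(s a, t a) | a. True}"
  have st: "(s a, t a) \<in> ?R" by blast
  have reach: "\<forall>u\<in>set (pverts t i p). (u, t a) \<in> ?R\<^sup>*"
    using cons.IH st by (meson rtrancl.rtrancl_into_rtrancl)
  have "t a \<notin> set (pverts t i p)"
  proof
    assume "t a \<in> set (pverts t i p)"
    then have "(t a, s a) \<in> ?R\<^sup>*" using cons.IH by blast
    then have "(t a, t a) \<in> ?R\<^sup>+" using st by (meson rtrancl_into_trancl1)
    then show False using ac unfolding acyclic_def by blast
  qed
  then show ?case using cons.IH reach by auto
qed

lemma finite_paths:
  fixes s t :: "'e::finite \<Rightarrow> 'v::finite"
  assumes ac: "acyclic {(s a, t a) | a. True}"
  shows "finite {p. qpath s t j v p}"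
proof (rule finite_subset)
  show "{p. qpath s t j v p} \<subseteq> {p. set p \<subseteq> UNIV \<and> length p \<le> card (UNIV :: 'v set)}"
  proof (intro subsetI CollectI conjI subset_UNIV UNIV_I)
    fix p assume "p \<in> {p. qpath s t j v p}"
    then have "qpath s t j v p" by simp
    then have "distinct (pverts t j p)" using qpath_pverts[OF ac] by blast
    then have "length (pverts t j p) \<le> card (UNIV :: 'v set)"
      by (metis card_mono distinct_card finite subset_UNIV)
    then show "length p \<le> card (UNIV :: 'v set)" using length_pverts[of t j p] by simp
  qed
  show "finite {p. set p \<subseteq> (UNIV::'e set) \<and> length p \<le> card (UNIV :: 'v set)}"
    by (rule finite_lists_length_le) simp
qed

lemma paths_from_sink:
  assumes "\<forall>a. s a \<noteq> i"
  shows "{p. qpath s t i v p} = (if v = i then {[]} else {})"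
proof -
  have "qpath s t i v p \<Longrightarrow> p = [] \<and> v = i" for p
  proof (induction p arbitrary: v)
    case Nil then show ?case by cases auto
  next
    case (Cons a p)
    from Cons.prems have "qpath s t i (s a) p" by cases auto
    then show ?case using Cons.IH assms by blast
  qed
  then show ?thesis using qpath.nil[of s t i] by auto
qed

lemma Delta_dimv: "dimv (Delta s t j) v = length (path_basis s t j v)"
  unfolding Delta_def by simp

lemma Delta_amap: "amap (Delta s t j) a =
   mat (length (path_basis s t j (t a))) (length (path_basis s t j (s a)))
       (\<lambda>(r, c). if path_basis s t j (t a) ! r = a # (path_basis s t j (s a) ! c) then 1 else 0)"
  unfolding Delta_def by simp

lemma Delta_smap: "smap (Delta s t j) a = 0\<^sub>m (length (path_basis s t j (s a))) (length (path_basis s t j (t a)))"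
  unfolding Delta_def by simp

lemma dim_Delta_sink:
  assumes "\<forall>a. s a \<noteq> i"
  shows "dimv (Delta s t i) v = (if v = i then 1 else 0)"
proof -
  have "finite {p. qpath s t i v p}" using paths_from_sink[OF assms, of t v] by simp
  then have "length (path_basis s t i v) = card {p. qpath s t i v p}"
    using path_basis_props distinct_card by metis
  then show ?thesis unfolding Delta_dimv paths_from_sink[OF assms] by simp
qed

text \<open>The matrices of a representation have the sizes prescribed by the dimension vector.
  This is all of the \<open>D\<close>-module structure that the argument uses.\<close>
definition well_shaped :: "('e \<Rightarrow> 'v) \<Rightarrow> ('e \<Rightarrow> 'v) \<Rightarrow> ('v, 'e, 'k::field) drep \<Rightarrow> bool" where
  "well_shaped s t M \<longleftrightarrow>
    (\<forall>a. amap M a \<in> carrier_mat (dimv M (t a)) (dimv M (s a))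
       \<and> smap M a \<in> carrier_mat (dimv M (s a)) (dimv M (t a)))"

lemma Drep_well_shaped: "is_Drep s t M \<Longrightarrow> well_shaped s t M"
  unfolding is_Drep_def well_shaped_def by blast

lemma Delta_well_shaped: "well_shaped s t (Delta s t j)"
  unfolding well_shaped_def Delta_smap Delta_amap Delta_dimv by simp

definition incoming_arg :: "('e \<Rightarrow> 'v) \<Rightarrow> ('e \<Rightarrow> 'v) \<Rightarrow> 'v \<Rightarrow> ('v, 'e, 'k::field) drep
    \<Rightarrow> ('e \<Rightarrow> 'k vec) \<Rightarrow> bool" where
  "incoming_arg s t i M x \<longleftrightarrow> (\<forall>a. t a = i \<longrightarrow> x a \<in> carrier_vec (dimv M (s a)))"

definition incoming :: "('e \<Rightarrow> 'v) \<Rightarrow> ('e \<Rightarrow> 'v) \<Rightarrow> 'v \<Rightarrow> ('v, 'e, 'k::field) drep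
    \<Rightarrow> ('e \<Rightarrow> 'k vec) \<Rightarrow> 'k vec" where
  "incoming s t i M x = vec (dimv M i) (\<lambda>r. \<Sum>a\<in>{a. t a = i}. (amap M a *\<^sub>v x a) $ r)"

lemma incoming_cong:
  "(\<And>a. t a = i \<Longrightarrow> x a = y a) \<Longrightarrow> incoming s t i M x = incoming s t i M y"
  unfolding incoming_def by (intro eq_vecI) (auto intro: sum.cong)

lemma incoming_zero:
  assumes M: "well_shaped s t M" and x: "\<And>a. t a = i \<Longrightarrow> x a = 0\<^sub>v (dimv M (s a))"
  shows "incoming s t i M x = 0\<^sub>v (dimv M i)"
proof (rule eq_vecI)
  have term_zero: "(amap M a *\<^sub>v x a) $ r = 0" if a: "t a = i" and r: "r < dimv M i" for a r
  proof -
    have "amap M a \<in> carrier_mat (dimv M i) (dimv M (s a))"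
      using M a unfolding well_shaped_def by auto
    then show ?thesis using x[OF a] r by (simp add: mult_mat_zero_vec)
  qed
  fix r assume "r < dim_vec (0\<^sub>v (dimv M i))"
  then show "incoming s t i M x $ r = 0\<^sub>v (dimv M i) $ r"
    using term_zero unfolding incoming_def by (auto intro!: sum.neutral)
qed (simp add: incoming_def)

lemma incoming_natural:
  assumes M: "well_shaped s t M" and N: "well_shaped s t N" and \<phi>: "is_hom s t M N \<phi>"
    and x: "incoming_arg s t i M x"
  shows "\<phi> i *\<^sub>v incoming s t i M x = incoming s t i N (\<lambda>a. \<phi> (s a) *\<^sub>v x a)"
proof (rule eq_vecI)
  have \<phi>C: "\<And>v. \<phi> v \<in> carrier_mat (dimv N v) (dimv M v)"
    and \<phi>a: "\<And>a. amap N a * \<phi> (s a) = \<phi> (t a) * amap M a"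
    using \<phi> unfolding is_hom_def by blast+
  have MC: "\<And>a. amap M a \<in> carrier_mat (dimv M (t a)) (dimv M (s a))"
    using M unfolding well_shaped_def by blast
  have NC: "\<And>a. amap N a \<in> carrier_mat (dimv N (t a)) (dimv N (s a))"
    using N unfolding well_shaped_def by blast
  have xC: "\<And>a. t a = i \<Longrightarrow> x a \<in> carrier_vec (dimv M (s a))"
    using x unfolding incoming_arg_def by blast
  show "dim_vec (\<phi> i *\<^sub>v incoming s t i M x) = dim_vec (incoming s t i N (\<lambda>a. \<phi> (s a) *\<^sub>v x a))"
    using \<phi>C[of i] unfolding incoming_def by simp
  fix r assume "r < dim_vec (incoming s t i N (\<lambda>a. \<phi> (s a) *\<^sub>v x a))"
  then have r: "r < dimv N i" unfolding incoming_def by simp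
  have "(\<phi> i *\<^sub>v incoming s t i M x) $ r = (\<Sum>a\<in>{a. t a = i}. (\<phi> i *\<^sub>v (amap M a *\<^sub>v x a)) $ r)"
    unfolding incoming_def
  proof (rule mult_mat_vec_sum[OF \<phi>C[of i] _ r], intro ballI)
    fix a assume "a \<in> {a. t a = i}"
    then show "amap M a *\<^sub>v x a \<in> carrier_vec (dimv M i)"
      using mult_mat_vec_carrier[OF MC[of a] xC] by simp
  qed
  also have "\<dots> = (\<Sum>a\<in>{a. t a = i}. (amap N a *\<^sub>v (\<phi> (s a) *\<^sub>v x a)) $ r)"
  proof (intro sum.cong refl)
    fix a assume "a \<in> {a. t a = i}"
    then have ta: "t a = i" by simp
    have "amap N a *\<^sub>v (\<phi> (s a) *\<^sub>v x a) = (amap N a * \<phi> (s a)) *\<^sub>v x a"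
      using NC[of a] \<phi>C[of "s a"] xC[OF ta] by simp
    also have "\<dots> = (\<phi> (t a) * amap M a) *\<^sub>v x a" by (simp only: \<phi>a)
    also have "\<dots> = \<phi> (t a) *\<^sub>v (amap M a *\<^sub>v x a)"
      using MC[of a] \<phi>C[of "t a"] xC[OF ta] by simp
    finally show "(\<phi> i *\<^sub>v (amap M a *\<^sub>v x a)) $ r = (amap N a *\<^sub>v (\<phi> (s a) *\<^sub>v x a)) $ r"
      using ta by simp
  qed
  also have "\<dots> = incoming s t i N (\<lambda>a. \<phi> (s a) *\<^sub>v x a) $ r"
    unfolding incoming_def using r by simp
  finally show "(\<phi> i *\<^sub>v incoming s t i M x) $ r = incoming s t i N (\<lambda>a. \<phi> (s a) *\<^sub>v x a) $ r" .
qed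

text \<open>The incoming map at \<open>i\<close> is injective.  This is the property of \<open>\<Delta>\<close>-filtered modules
  that makes the extension split.\<close>
definition incoming_injective :: "('e \<Rightarrow> 'v) \<Rightarrow> ('e \<Rightarrow> 'v) \<Rightarrow> 'v \<Rightarrow> ('v, 'e, 'k::field) drep \<Rightarrow> bool" where
  "incoming_injective s t i M \<longleftrightarrow>
    (\<forall>x. incoming_arg s t i M x \<longrightarrow> incoming s t i M x = 0\<^sub>v (dimv M i) \<longrightarrow>
       (\<forall>a. t a = i \<longrightarrow> x a = 0\<^sub>v (dimv M (s a))))"

lemma incoming_injective_zero_module:
  assumes "\<forall>v. dimv M v = 0"
  shows "incoming_injective s t i M"
  using assms unfolding incoming_injective_def incoming_arg_def carrier_vec_def by auto

text \<open>In \<open>\<Delta>(j)\<close>, the coordinate of the incoming sum at the basis path \<open>a0 # p\<close> is the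
  coordinate of the \<open>a0\<close>-component at \<open>p\<close>: distinct arrows or paths give distinct composites.\<close>
lemma incoming_Delta_coord:
  fixes s t :: "'e::finite \<Rightarrow> 'v::finite"
  assumes ac: "acyclic {(s a, t a) | a. True}" and x: "incoming_arg s t i (Delta s t j) x"
    and a0: "t a0 = i" and c0: "c0 < length (path_basis s t j (s a0))"
    and r0: "r0 < length (path_basis s t j i)"
    and path: "path_basis s t j i ! r0 = a0 # path_basis s t j (s a0) ! c0"
  shows "incoming s t i (Delta s t j :: ('v, 'e, 'k::field) drep) x $ r0 = x a0 $ c0"
proof -
  define B where "B = path_basis s t j"
  have dB: "\<And>v. distinct (B v)"
    unfolding B_def using path_basis_props[OF finite_paths[OF ac]] by blast
  have xC: "\<And>a. t a = i \<Longrightarrow> x a \<in> carrier_vec (length (B (s a)))"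
    using x unfolding incoming_arg_def Delta_dimv B_def by blast
  have entry: "(amap (Delta s t j) a *\<^sub>v x a) $ r0 = (if a = a0 then x a0 $ c0 else 0)"
    if ta: "t a = i" for a
  proof -
    have "(amap (Delta s t j) a *\<^sub>v x a) $ r0 =
        (\<Sum>c\<in>{0..<length (B (s a))}. (if B i ! r0 = a # B (s a) ! c then 1 else 0) * x a $ c)"
      unfolding Delta_amap B_def[symmetric] using r0 ta xC[OF ta]
      by (auto simp: scalar_prod_def B_def)
    also have "\<dots> = (\<Sum>c\<in>{0..<length (B (s a))}. if a = a0 \<and> c = c0 then x a $ c else 0)"
    proof (intro sum.cong refl)
      fix c assume c: "c \<in> {0..<length (B (s a))}"
      have "B i ! r0 = a # B (s a) ! c \<longleftrightarrow> a = a0 \<and> c = c0"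
        using path c c0 dB[of "s a0"] nth_eq_iff_index_eq unfolding B_def by fastforce
      then show "(if B i ! r0 = a # B (s a) ! c then 1 else 0) * x a $ c
          = (if a = a0 \<and> c = c0 then x a $ c else 0)" by simp
    qed
    also have "\<dots> = (if a = a0 then x a0 $ c0 else 0)"
      using c0 unfolding B_def by (cases "a = a0") auto
    finally show ?thesis .
  qed
  have "incoming s t i (Delta s t j :: ('v, 'e, 'k) drep) x $ r0
      = (\<Sum>a\<in>{a. t a = i}. (amap (Delta s t j) a *\<^sub>v x a) $ r0)"
    using r0 unfolding incoming_def Delta_dimv by simp
  also have "\<dots> = (\<Sum>a\<in>{a. t a = i}. if a = a0 then x a0 $ c0 else 0)"
    using entry by (intro sum.cong) auto
  also have "\<dots> = x a0 $ c0" using a0 by simp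
  finally show ?thesis .
qed

lemma incoming_injective_Delta:
  fixes s t :: "'e::finite \<Rightarrow> 'v::finite"
  assumes ac: "acyclic {(s a, t a) | a. True}"
  shows "incoming_injective s t i (Delta s t j :: ('v, 'e, 'k::field) drep)"
  unfolding incoming_injective_def
proof (intro allI impI)
  define B where "B = path_basis s t j"
  have sB: "\<And>v. set (B v) = {p. qpath s t j v p}"
    unfolding B_def using path_basis_props[OF finite_paths[OF ac]] by blast
  fix x a0
  assume x: "incoming_arg s t i (Delta s t j :: ('v, 'e, 'k) drep) x"
    and zero: "incoming s t i (Delta s t j :: ('v, 'e, 'k) drep) x = 0\<^sub>v (dimv (Delta s t j :: ('v, 'e, 'k) drep) i)"
    and a0: "t a0 = i"
  show "x a0 = 0\<^sub>v (dimv (Delta s t j :: ('v, 'e, 'k) drep) (s a0))"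
  proof (rule eq_vecI)
    show "dim_vec (x a0) = dim_vec (0\<^sub>v (dimv (Delta s t j :: ('v, 'e, 'k) drep) (s a0)))"
      using x a0 unfolding incoming_arg_def by simp
    fix c0 assume "c0 < dim_vec (0\<^sub>v (dimv (Delta s t j :: ('v, 'e, 'k) drep) (s a0)))"
    then have c0: "c0 < length (B (s a0))" unfolding Delta_dimv B_def by simp
    text \<open>Extending the \<open>c0\<close>-th path to \<open>s a0\<close> by \<open>a0\<close> gives a basis path to \<open>i\<close>,
      whose coordinate in the incoming sum is exactly \<open>x a0 $ c0\<close>.\<close>
    have "qpath s t j (s a0) (B (s a0) ! c0)" using c0 sB by (metis mem_Collect_eq nth_mem)
    then have "qpath s t j i (a0 # B (s a0) ! c0)" using qpath.cons a0 by metis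
    then obtain r0 where r0: "r0 < length (B i)" "B i ! r0 = a0 # B (s a0) ! c0"
      using sB by (metis in_set_conv_nth mem_Collect_eq)
    have "x a0 $ c0 = incoming s t i (Delta s t j :: ('v, 'e, 'k) drep) x $ r0"
      using incoming_Delta_coord[OF ac x a0] c0 r0 unfolding B_def by simp
    also have "\<dots> = 0" using zero r0 unfolding Delta_dimv B_def by simp
    finally show "x a0 $ c0 = 0\<^sub>v (dimv (Delta s t j :: ('v, 'e, 'k) drep) (s a0)) $ c0"
      using c0 unfolding Delta_dimv B_def by simp
  qed
qed

lemma incoming_injective_extension:
  assumes M': "well_shaped s t M'" and M: "well_shaped s t M" and N: "well_shaped s t N"
    and ses: "is_ses s t M' M N f g"
    and inj': "incoming_injective s t i M'" and injN: "incoming_injective s t i N"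
  shows "incoming_injective s t i M"
  unfolding incoming_injective_def
proof (intro allI impI)
  fix x a0
  assume x: "incoming_arg s t i M x" and zero: "incoming s t i M x = 0\<^sub>v (dimv M i)"
    and a0: "t a0 = i"
  have f: "is_hom s t M' M f" and g: "is_hom s t M N g"
    using ses unfolding is_ses_def by blast+
  have fC: "\<And>v. f v \<in> carrier_mat (dimv M v) (dimv M' v)"
    and gC: "\<And>v. g v \<in> carrier_mat (dimv N v) (dimv M v)"
    using f g unfolding is_hom_def by blast+
  have f_inj: "\<And>v z. z \<in> carrier_vec (dimv M' v) \<Longrightarrow> f v *\<^sub>v z = 0\<^sub>v (dimv M v) \<Longrightarrow> z = 0\<^sub>v (dimv M' v)"
    and ker_g: "\<And>v y. y \<in> carrier_vec (dimv M v) \<Longrightarrow> g v *\<^sub>v y = 0\<^sub>v (dimv N v) \<Longrightarrow>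
        \<exists>z \<in> carrier_vec (dimv M' v). y = f v *\<^sub>v z"
    using ses unfolding is_ses_def by blast+
  have xC: "\<And>a. t a = i \<Longrightarrow> x a \<in> carrier_vec (dimv M (s a))"
    using x unfolding incoming_arg_def by blast
  text \<open>The images of the components of \<open>x\<close> in \<open>N\<close> have zero incoming sum, hence vanish.\<close>
  have "incoming s t i N (\<lambda>a. g (s a) *\<^sub>v x a) = g i *\<^sub>v incoming s t i M x"
    using incoming_natural[OF M N g x] by simp
  also have "\<dots> = 0\<^sub>v (dimv N i)" using zero gC[of i] by (simp add: mult_mat_zero_vec)
  finally have "incoming s t i N (\<lambda>a. g (s a) *\<^sub>v x a) = 0\<^sub>v (dimv N i)" .
  moreover have "incoming_arg s t i N (\<lambda>a. g (s a) *\<^sub>v x a)"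
    using xC gC unfolding incoming_arg_def by (auto intro: mult_mat_vec_carrier)
  ultimately have gx: "\<And>a. t a = i \<Longrightarrow> g (s a) *\<^sub>v x a = 0\<^sub>v (dimv N (s a))"
    using injN unfolding incoming_injective_def by blast
  text \<open>So each component comes from \<open>M'\<close>, and the lifted family again has zero incoming sum.\<close>
  have "\<exists>z. t a = i \<longrightarrow> z \<in> carrier_vec (dimv M' (s a)) \<and> x a = f (s a) *\<^sub>v z" for a
    using ker_g[OF xC gx] by blast
  then have "\<forall>a. \<exists>z. t a = i \<longrightarrow> z \<in> carrier_vec (dimv M' (s a)) \<and> x a = f (s a) *\<^sub>v z"
    by blast
  then have "\<exists>z. \<forall>a. t a = i \<longrightarrow> z a \<in> carrier_vec (dimv M' (s a)) \<and> x a = f (s a) *\<^sub>v z a"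
    by (rule choice)
  then obtain z where z: "\<And>a. t a = i \<Longrightarrow> z a \<in> carrier_vec (dimv M' (s a)) \<and> x a = f (s a) *\<^sub>v z a"
    by blast
  have z_arg: "incoming_arg s t i M' z" using z unfolding incoming_arg_def by blast
  have "f i *\<^sub>v incoming s t i M' z = incoming s t i M (\<lambda>a. f (s a) *\<^sub>v z a)"
    by (rule incoming_natural[OF M' M f z_arg])
  also have "\<dots> = incoming s t i M x" using z by (intro incoming_cong) simp
  finally have "incoming s t i M' z = 0\<^sub>v (dimv M' i)"
    using zero f_inj[of "incoming s t i M' z" i] unfolding incoming_def by simp
  then have "z a0 = 0\<^sub>v (dimv M' (s a0))"
    using inj' z_arg a0 unfolding incoming_injective_def by blast
  then show "x a0 = 0\<^sub>v (dimv M (s a0))"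
    using z[OF a0] fC[of "s a0"] by (simp add: mult_mat_zero_vec)
qed

lemma Delta_filtered_well_shaped: "Delta_filtered s t M \<Longrightarrow> well_shaped s t M"
  by (induction rule: Delta_filtered.induct) (auto intro: Drep_well_shaped)

lemma Delta_filtered_incoming_injective:
  fixes s t :: "'e::finite \<Rightarrow> 'v::finite"
  assumes ac: "acyclic {(s a, t a) | a. True}"
    and "Delta_filtered s t (M :: ('v, 'e, 'k::field) drep)"
  shows "incoming_injective s t i M"
  using assms(2)
proof (induction rule: Delta_filtered.induct)
  case (zero M)
  then show ?case by (intro incoming_injective_zero_module) blast
next
  case (step M' M j f g)
  show ?case
    using incoming_injective_extension[OF Delta_filtered_well_shaped[OF step.hyps(1)]
        Drep_well_shaped[OF step.hyps(2)] Delta_well_shaped step.hyps(3) step.IH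
        incoming_injective_Delta[OF ac]] by blast
qed

lemma ses_comp_zero:
  fixes N :: "('v, 'e, 'k::field) drep"
  assumes ses: "is_ses s t N E M f g"
  shows "g v * f v = 0\<^sub>m (dimv M v) (dimv N v)"
proof -
  have fC: "f v \<in> carrier_mat (dimv E v) (dimv N v)" and gC: "g v \<in> carrier_mat (dimv M v) (dimv E v)"
    using ses unfolding is_ses_def is_hom_def by blast+
  have exact: "\<forall>y\<in>carrier_vec (dimv E v). g v *\<^sub>v y = 0\<^sub>v (dimv M v)
      \<longleftrightarrow> (\<exists>x\<in>carrier_vec (dimv N v). y = f v *\<^sub>v x)"
    using ses unfolding is_ses_def by blast
  show ?thesis
  proof (rule mat_col_eqI)
    fix c assume "c < dim_col (0\<^sub>m (dimv M v) (dimv N v) :: 'k mat)"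
    then have c: "c < dimv N v" by simp
    have "col (g v * f v) c = g v *\<^sub>v (f v *\<^sub>v unit_vec (dimv N v) c)"
      using col_mult2[OF gC fC c] col_as_mult_unit[OF fC c] by simp
    also have "\<dots> = 0\<^sub>v (dimv M v)"
      using exact mult_mat_vec_carrier[OF fC unit_vec_carrier] unit_vec_carrier by blast
    finally show "col (g v * f v) c = col (0\<^sub>m (dimv M v) (dimv N v)) c" using c by simp
  qed (use fC gC in auto)
qed

lemma section_commutes:
  fixes XE :: "'k::field mat"
  assumes XE: "XE \<in> carrier_mat ew eu" and XM: "XM \<in> carrier_mat mw mu" and XN: "XN \<in> carrier_mat nw nu"
    and gu: "gu \<in> carrier_mat mu eu" and gw: "gw \<in> carrier_mat mw ew" and fw: "fw \<in> carrier_mat ew nw"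
    and Ru: "Ru \<in> carrier_mat nu eu" and Rw: "Rw \<in> carrier_mat nw ew"
    and hu: "hu \<in> carrier_mat eu mu" and hw: "hw \<in> carrier_mat ew mw"
    and g_comm: "gw * XE = XM * gu" and R_comm: "Rw * XE = XN * Ru"
    and Rhu: "Ru * hu = 0\<^sub>m nu mu" and Rhw: "Rw * hw = 0\<^sub>m nw mw"
    and ghu: "gu * hu = 1\<^sub>m mu" and ghw: "gw * hw = 1\<^sub>m mw" and Rf: "Rw * fw = 1\<^sub>m nw"
    and ker: "\<forall>y\<in>carrier_vec ew. gw *\<^sub>v y = 0\<^sub>v mw \<longrightarrow> (\<exists>x\<in>carrier_vec nw. y = fw *\<^sub>v x)"
  shows "XE * hu = hw * XM"
proof -
  define D where "D = XE * hu - hw * XM"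
  have DC: "D \<in> carrier_mat ew mu" unfolding D_def using XE hu hw XM by auto
  have "gw * D = gw * (XE * hu) - gw * (hw * XM)"
    unfolding D_def by (rule mult_minus_distrib_mat[OF gw]) (use XE hu hw XM in auto)
  also have "\<dots> = (gw * XE) * hu - (gw * hw) * XM" using gw XE hu hw XM by simp
  also have "\<dots> = 0\<^sub>m mw mu" unfolding g_comm ghw using XM gu hu by (simp add: ghu)
  finally have gD: "gw * D = 0\<^sub>m mw mu" .
  have "Rw * D = Rw * (XE * hu) - Rw * (hw * XM)"
    unfolding D_def by (rule mult_minus_distrib_mat[OF Rw]) (use XE hu hw XM in auto)
  also have "\<dots> = (Rw * XE) * hu - (Rw * hw) * XM" using Rw XE hu hw XM by simp
  also have "\<dots> = 0\<^sub>m nw mu" unfolding R_comm Rhw using XN Ru hu XM by (simp add: Rhu)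
  finally have RD: "Rw * D = 0\<^sub>m nw mu" .
  have D0: "D = 0\<^sub>m ew mu" by (rule zero_by_exactness[OF DC gw fw Rw ker Rf gD RD])
  show ?thesis
  proof (rule eq_matI)
    fix r c assume "r < dim_row (hw * XM)" "c < dim_col (hw * XM)"
    then have "r < ew" "c < mu" using hw XM by auto
    then show "(XE * hu) $$ (r, c) = (hw * XM) $$ (r, c)"
      using arg_cong[OF D0, of "\<lambda>A. A $$ (r, c)"] XE hu hw XM unfolding D_def by simp
  qed (use XE hu hw XM in auto)
qed

lemma split_by_retraction:
  assumes N: "well_shaped s t N" and E: "well_shaped s t E" and M: "well_shaped s t M"
    and ses: "is_ses s t N E M f g"
    and R: "is_hom s t E N R" and Rf: "\<And>v. R v * f v = 1\<^sub>m (dimv N v)"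
  shows "\<exists>h. is_hom s t M E h \<and> (\<forall>v. g v * h v = 1\<^sub>m (dimv M v))"
proof -
  have fC: "\<And>v. f v \<in> carrier_mat (dimv E v) (dimv N v)"
    and gC: "\<And>v. g v \<in> carrier_mat (dimv M v) (dimv E v)"
    and ga: "\<And>a. amap M a * g (s a) = g (t a) * amap E a"
    and gs: "\<And>a. smap M a * g (t a) = g (s a) * smap E a"
    using ses unfolding is_ses_def is_hom_def by blast+
  have RC: "\<And>v. R v \<in> carrier_mat (dimv N v) (dimv E v)"
    and Ra: "\<And>a. amap N a * R (s a) = R (t a) * amap E a"
    and Rs: "\<And>a. smap N a * R (t a) = R (s a) * smap E a"
    using R unfolding is_hom_def by blast+
  have surj: "\<And>v. \<forall>z\<in>carrier_vec (dimv M v). \<exists>y\<in>carrier_vec (dimv E v). g v *\<^sub>v y = z"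
    and ker: "\<And>v. \<forall>y\<in>carrier_vec (dimv E v). g v *\<^sub>v y = 0\<^sub>v (dimv M v)
        \<longrightarrow> (\<exists>x\<in>carrier_vec (dimv N v). y = f v *\<^sub>v x)"
    using ses unfolding is_ses_def by blast+
  have "\<forall>v. \<exists>Y. Y \<in> carrier_mat (dimv E v) (dimv M v) \<and> g v * Y = 1\<^sub>m (dimv M v)"
    using right_inverse_of_surjective[OF gC surj] by blast
  then obtain Y where YC: "\<And>v. Y v \<in> carrier_mat (dimv E v) (dimv M v)"
    and gY: "\<And>v. g v * Y v = 1\<^sub>m (dimv M v)" by metis
  define h where "h v = (1\<^sub>m (dimv E v) - f v * R v) * Y v" for v
  have hC: "\<And>v. h v \<in> carrier_mat (dimv E v) (dimv M v)"
    unfolding h_def using fC RC YC by (meson minus_carrier_mat mult_carrier_mat one_carrier_mat)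
  have gh: "\<And>v. g v * h v = 1\<^sub>m (dimv M v)" and Rh: "\<And>v. R v * h v = 0\<^sub>m (dimv N v) (dimv M v)"
    unfolding h_def using corrected_section[OF gC fC RC YC ses_comp_zero[OF ses] Rf gY] by auto
  have "is_hom s t M E h"
    unfolding is_hom_def
  proof (intro conjI allI)
    fix a
    have EC: "amap E a \<in> carrier_mat (dimv E (t a)) (dimv E (s a))"
      "smap E a \<in> carrier_mat (dimv E (s a)) (dimv E (t a))"
      using E unfolding well_shaped_def by blast+
    have MC: "amap M a \<in> carrier_mat (dimv M (t a)) (dimv M (s a))"
      "smap M a \<in> carrier_mat (dimv M (s a)) (dimv M (t a))"
      using M unfolding well_shaped_def by blast+
    have NC: "amap N a \<in> carrier_mat (dimv N (t a)) (dimv N (s a))"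
      "smap N a \<in> carrier_mat (dimv N (s a)) (dimv N (t a))"
      using N unfolding well_shaped_def by blast+
    show "amap E a * h (s a) = h (t a) * amap M a"
      by (rule section_commutes[OF EC(1) MC(1) NC(1) gC gC fC RC RC hC hC ga[symmetric]
            Ra[symmetric] Rh Rh gh gh Rf ker])
    show "smap E a * h (t a) = h (s a) * smap M a"
      by (rule section_commutes[OF EC(2) MC(2) NC(2) gC gC fC RC RC hC hC gs[symmetric]
            Rs[symmetric] Rh Rh gh gh Rf ker])
  qed (rule hC)
  then show ?thesis using gh by blast
qed

text \<open>The functional \<open>y\<close> on \<open>E_i\<close> defining a retraction onto the simple module at the sink \<open>i\<close>:
  it must be 1 on the image of \<open>f\<close> and vanish on the images of all arrows ending at \<open>i\<close>.\<close>
definition sink_functional :: "('e \<Rightarrow> 'v) \<Rightarrow> ('e \<Rightarrow> 'v) \<Rightarrow> 'v \<Rightarrow> ('v, 'e, 'k::field) drep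
    \<Rightarrow> ('v \<Rightarrow> 'k mat) \<Rightarrow> 'k vec \<Rightarrow> bool" where
  "sink_functional s t i E f y \<longleftrightarrow> y \<in> carrier_vec (dimv E i) \<and> y \<bullet> (f i *\<^sub>v unit_vec 1 0) = 1 \<and>
     (\<forall>a. t a = i \<longrightarrow> (\<forall>c<dimv E (s a). y \<bullet> col (amap E a) c = 0))"

lemma sink_retraction:
  fixes N :: "('v, 'e, 'k::field) drep"
  assumes N: "well_shaped s t N" and E: "well_shaped s t E"
    and dimN: "\<And>v. dimv N v = (if v = i then 1 else 0)" and sink: "\<forall>a. s a \<noteq> i"
    and fC: "\<And>v. f v \<in> carrier_mat (dimv E v) (dimv N v)"
    and y: "sink_functional s t i E f y"
  shows "\<exists>R. is_hom s t E N R \<and> (\<forall>v. R v * f v = 1\<^sub>m (dimv N v))"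
proof -
  define R where "R v = mat (dimv N v) (dimv E v) (\<lambda>(_, c). y $ c)" for v
  have RC: "\<And>v. R v \<in> carrier_mat (dimv N v) (dimv E v)" unfolding R_def by simp
  have yC: "y \<in> carrier_vec (dimv E i)" using y unfolding sink_functional_def by blast
  have row_R: "\<And>r. r < dimv N i \<Longrightarrow> row (R i) r = y"
    unfolding R_def using yC by (intro eq_vecI) auto
  have N0: "\<And>a. dimv N (s a) = 0" using dimN sink by simp
  have "is_hom s t E N R"
    unfolding is_hom_def
  proof (intro conjI allI)
    fix a
    have EaC: "amap E a \<in> carrier_mat (dimv E (t a)) (dimv E (s a))"
      and NaC: "amap N a \<in> carrier_mat (dimv N (t a)) (dimv N (s a))"
      and EsC: "smap E a \<in> carrier_mat (dimv E (s a)) (dimv E (t a))"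
      and NsC: "smap N a \<in> carrier_mat (dimv N (s a)) (dimv N (t a))"
      using E N unfolding well_shaped_def by blast+
    show "amap N a * R (s a) = R (t a) * amap E a"
    proof (rule eq_matI)
      fix r c assume r: "r < dim_row (R (t a) * amap E a)" and c: "c < dim_col (R (t a) * amap E a)"
      then have ta: "t a = i" and r': "r < dimv N i" and c': "c < dimv E (s a)"
        using RC[of "t a"] EaC dimN[of "t a"] by (auto split: if_splits)
      text \<open>Both sides vanish: the left one factors through \<open>N_(s a) = 0\<close>, the right one because
        \<open>y\<close> kills the columns of \<open>amap E a\<close>.\<close>
      have "(R (t a) * amap E a) $$ (r, c) = y \<bullet> col (amap E a) c"
        using RC EaC r c ta row_R[OF r'] by simp
      also have "\<dots> = 0" using y ta c' unfolding sink_functional_def by blast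
      also have "\<dots> = (amap N a * R (s a)) $$ (r, c)"
        using NaC RC[of "s a"] r' c' ta N0[of a] by (simp add: scalar_prod_def)
      finally show "(amap N a * R (s a)) $$ (r, c) = (R (t a) * amap E a) $$ (r, c)" by simp
    qed (use NaC RC[of "s a"] RC[of "t a"] EaC in auto)
    show "smap N a * R (t a) = R (s a) * smap E a"
      using NsC RC[of "s a"] RC[of "t a"] EsC N0[of a] by (intro eq_matI) auto
  qed (rule RC)
  moreover have "R v * f v = 1\<^sub>m (dimv N v)" for v
  proof (rule eq_matI)
    fix r c assume "r < dim_row (1\<^sub>m (dimv N v))" "c < dim_col (1\<^sub>m (dimv N v))"
    then have v: "v = i" and rc: "r = 0" "c = 0" using dimN[of v] by (auto split: if_splits)
    have Ni: "dimv N i = 1" using dimN by simp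
    have "(R i * f i) $$ (0, 0) = row (R i) 0 \<bullet> col (f i) 0"
      using RC[of i] fC[of i] Ni by simp
    also have "\<dots> = y \<bullet> (f i *\<^sub>v unit_vec 1 0)"
      using row_R col_as_mult_unit[OF fC[of i]] Ni by simp
    also have "\<dots> = 1" using y unfolding sink_functional_def by blast
    finally show "(R v * f v) $$ (r, c) = 1\<^sub>m (dimv N v) $$ (r, c)" using v rc dimN by simp
  qed (use RC fC in auto)
  ultimately show ?thesis by blast
qed

text \<open>The image of \<open>f\<close> at the sink is not in the span of the images of the incoming arrows:
  otherwise pushing the relation to \<open>M\<close> and using injectivity would force it to be zero.\<close>
lemma sink_functional_exists:
  fixes s t :: "'e::finite \<Rightarrow> 'v"
  assumes E: "well_shaped s t E" and M: "well_shaped s t M" and ses: "is_ses s t N E M f g"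
    and injM: "incoming_injective s t i M"
    and N0: "\<And>a. dimv N (s a) = 0" and Ni: "dimv N i = 1"
  shows "\<exists>y. sink_functional s t i E f y"
proof -
  let ?n = "dimv E i"
  define f1 where "f1 = f i *\<^sub>v unit_vec 1 0"
  define J where "J = (SIGMA a:{a. t a = i}. {0..<dimv E (s a)})"
  define cv where "cv = (\<lambda>(a, k). col (amap E a) k)"
  have fC: "\<And>v. f v \<in> carrier_mat (dimv E v) (dimv N v)"
    and g: "is_hom s t E M g"
    and f_inj: "\<And>v x. x \<in> carrier_vec (dimv N v) \<Longrightarrow> f v *\<^sub>v x = 0\<^sub>v (dimv E v) \<Longrightarrow> x = 0\<^sub>v (dimv N v)"
    and ker_g: "\<And>v y. y \<in> carrier_vec (dimv E v) \<Longrightarrow> g v *\<^sub>v y = 0\<^sub>v (dimv M v) \<Longrightarrow>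
        \<exists>x\<in>carrier_vec (dimv N v). y = f v *\<^sub>v x"
    using ses unfolding is_ses_def is_hom_def by blast+
  have gC: "\<And>v. g v \<in> carrier_mat (dimv M v) (dimv E v)" using g unfolding is_hom_def by blast
  have EaC: "\<And>a. amap E a \<in> carrier_mat (dimv E (t a)) (dimv E (s a))"
    using E unfolding well_shaped_def by blast
  have f1C: "f1 \<in> carrier_vec ?n" unfolding f1_def using fC[of i] Ni by simp
  have f1_nonzero: "f1 \<noteq> 0\<^sub>v ?n"
    using f_inj[of "unit_vec 1 0" i] Ni unit_vec_nonzero[of 0 1] unfolding f1_def by auto
  have cvC: "\<forall>j\<in>J. cv j \<in> carrier_vec ?n" unfolding J_def cv_def using EaC by auto
  have "\<not> in_span ?n J cv f1"
  proof
    assume "in_span ?n J cv f1"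
    then obtain c where c: "\<forall>r<?n. f1 $ r = (\<Sum>j\<in>J. c j * cv j $ r)"
      unfolding in_span_def by blast
    define x where "x a = vec (dimv E (s a)) (\<lambda>k. c (a, k))" for a
    have x: "incoming_arg s t i E x" unfolding incoming_arg_def x_def by simp
    have f1_incoming: "f1 = incoming s t i E x"
    proof (rule eq_vecI)
      fix r assume "r < dim_vec (incoming s t i E x)"
      then have r: "r < ?n" unfolding incoming_def by simp
      have "f1 $ r = (\<Sum>a\<in>{a. t a = i}. \<Sum>k\<in>{0..<dimv E (s a)}. c (a, k) * cv (a, k) $ r)"
        using c r unfolding J_def by (simp add: sum.Sigma)
      also have "\<dots> = (\<Sum>a\<in>{a. t a = i}. (amap E a *\<^sub>v x a) $ r)"
      proof (intro sum.cong refl)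
        fix a assume "a \<in> {a. t a = i}"
        then have A: "amap E a \<in> carrier_mat ?n (dimv E (s a))" using EaC[of a] by simp
        then show "(\<Sum>k\<in>{0..<dimv E (s a)}. c (a, k) * cv (a, k) $ r) = (amap E a *\<^sub>v x a) $ r"
          using r unfolding cv_def x_def by (auto simp: scalar_prod_def ac_simps intro: sum.cong)
      qed
      finally show "f1 $ r = incoming s t i E x $ r" unfolding incoming_def using r by simp
    qed (use f1C in \<open>simp add: incoming_def\<close>)
    text \<open>Applying \<open>g\<close> kills \<open>f1\<close>, so injectivity in \<open>M\<close> makes every \<open>g (x a)\<close> vanish.\<close>
    have "incoming s t i M (\<lambda>a. g (s a) *\<^sub>v x a) = g i *\<^sub>v f1"
      using incoming_natural[OF E M g x] f1_incoming by simp
    also have "\<dots> = (g i * f i) *\<^sub>v unit_vec 1 0" unfolding f1_def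
      using assoc_mult_mat_vec[OF gC[of i] fC[of i], of "unit_vec 1 0"] Ni by simp
    also have "\<dots> = 0\<^sub>v (dimv M i)" unfolding ses_comp_zero[OF ses] Ni by (intro eq_vecI) auto
    finally have "incoming s t i M (\<lambda>a. g (s a) *\<^sub>v x a) = 0\<^sub>v (dimv M i)" .
    moreover have "incoming_arg s t i M (\<lambda>a. g (s a) *\<^sub>v x a)"
      using x gC unfolding incoming_arg_def by (auto intro: mult_mat_vec_carrier)
    ultimately have gx: "\<And>a. t a = i \<Longrightarrow> g (s a) *\<^sub>v x a = 0\<^sub>v (dimv M (s a))"
      using injM unfolding incoming_injective_def by blast
    text \<open>Hence each \<open>x a\<close> comes from \<open>N_(s a) = 0\<close>, i.e. vanishes, and so does \<open>f1\<close>.\<close>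
    have "x a = 0\<^sub>v (dimv E (s a))" if ta: "t a = i" for a
    proof -
      obtain z where z: "z \<in> carrier_vec (dimv N (s a))" "x a = f (s a) *\<^sub>v z"
        using ker_g[OF _ gx[OF ta]] x ta unfolding incoming_arg_def by blast
      have "dim_vec z = 0" using carrier_vecD[OF z(1)] N0[of a] by argo
      then have "z = 0\<^sub>v 0" by (rule vec_of_dim_0[THEN iffD1])
      then show ?thesis using z(2) mult_mat_zero_vec[OF fC[of "s a"]] N0[of a] by simp
    qed
    then have "f1 = 0\<^sub>v ?n" unfolding f1_incoming by (rule incoming_zero[OF E])
    then show False using f1_nonzero by blast
  qed
  then have "separated ?n J cv f1"
    using span_or_separated[OF _ cvC f1C] unfolding J_def by auto
  then obtain y where y: "y \<in> carrier_vec ?n" "y \<bullet> f1 = 1" "\<forall>j\<in>J. y \<bullet> cv j = 0"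
    unfolding separated_def by blast
  have "\<forall>a. t a = i \<longrightarrow> (\<forall>c<dimv E (s a). y \<bullet> col (amap E a) c = 0)"
  proof (intro allI impI)
    fix a c assume "t a = i" "c < dimv E (s a)"
    then have "(a, c) \<in> J" unfolding J_def by simp
    then show "y \<bullet> col (amap E a) c = 0" using y(3) unfolding cv_def by auto
  qed
  then show ?thesis using y unfolding sink_functional_def f1_def by blast
qed

theorem mainTheorem9:
  fixes s t :: "'e::finite \<Rightarrow> 'v::finite"
    and M :: "('v, 'e, 'k::field) drep"
    and i :: 'v
  assumes "alg_closed TYPE('k)"
    and "acyclic {(s a, t a) | a. True}"
    and "Delta_filtered s t M"
    and "\<forall>a. s a \<noteq> i"
  shows "Ext1_vanishes s t M (Delta s t i)"
  unfolding Ext1_vanishes_def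
proof (intro allI impI)
  fix E f g
  assume DE: "is_Drep s t E" and ses: "is_ses s t (Delta s t i) E M f g"
  have E: "well_shaped s t E" using DE by (rule Drep_well_shaped)
  have M: "well_shaped s t M" by (rule Delta_filtered_well_shaped[OF assms(3)])
  have dimN: "\<And>v. dimv (Delta s t i :: ('v, 'e, 'k) drep) v = (if v = i then 1 else 0)"
    by (rule dim_Delta_sink[OF assms(4)])
  have fC: "\<And>v. f v \<in> carrier_mat (dimv E v) (dimv (Delta s t i :: ('v, 'e, 'k) drep) v)"
    using ses unfolding is_ses_def is_hom_def by blast
  have "\<And>a. dimv (Delta s t i :: ('v, 'e, 'k) drep) (s a) = 0" "dimv (Delta s t i :: ('v, 'e, 'k) drep) i = 1"
    using dimN assms(4) by auto
  then obtain y where "sink_functional s t i E f y"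
    using sink_functional_exists[OF E M ses Delta_filtered_incoming_injective[OF assms(2,3)]] by blast
  then obtain R where "is_hom s t E (Delta s t i) R" "\<And>v. R v * f v = 1\<^sub>m (dimv (Delta s t i :: ('v, 'e, 'k) drep) v)"
    using sink_retraction[OF Delta_well_shaped E dimN assms(4) fC] by blast
  then show "\<exists>h. is_hom s t M E h \<and> (\<forall>v. g v * h v = 1\<^sub>m (dimv M v))"
    by (rule split_by_retraction[OF Delta_well_shaped E M ses])
qed

end
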